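(* The rational functions $A_G(t/|G|)$ and $B_G(t/|G|)$ are family invariants of the finite group $G$; that is, if $G$ and $H$ are isoclinic finite groups, then $A_G(t/|G|)=A_H(t/|H|)$ and $B_G(t/|G|)=B_H(t/|H|)$.
   Context: For a finite group $G$ and $n\ge 0$, $G$ acts on $G^n$ by simultaneous conjugation. Let $G^{(n)}\subseteq G^n$ be the set of $n$-tuples of pairwise commuting elements. Let $\alpha_{G,n}$ (resp. $\beta_{G,n}$) be the number of $G$-orbits on $G^n$ (resp. on $G^{(n)}$), and set $A_G(t)=\sum_{n\ge0}\alpha_{G,n}t^n$, $B_G(t)=\sum_{n\ge0}\beta_{G,n}t^n$ (rational functions of $t$). Two finite groups $G$ and $H$ are isoclinic if there exist isomorphisms $\theta:G/Z(G)\to H/Z(H)$ and $\phi:G'\to H'$ (commutator subgroups) such that $\phi([g_1,g_2])=[h_1,h_2]$ whenever $\theta(g_iZ(G))=h_iZ(H)$, $i=1,2$. A family invariant is a quantity depending on a group that takes the same value on any two isoclinic groups. *)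

theory Defs
  imports "HOL-Algebra.Algebra" "HOL-Computational_Algebra.Formal_Power_Series"
begin

definition grp_center :: "('a, 'b) monoid_scheme \<Rightarrow> 'a set" where
  "grp_center G = {z \<in> carrier G. \<forall>g \<in> carrier G. z \<otimes>\<^bsub>G\<^esub> g = g \<otimes>\<^bsub>G\<^esub> z}"

text \<open>Commutator, same convention as the library's derived subgroup.\<close>
definition commutator :: "('a, 'b) monoid_scheme \<Rightarrow> 'a \<Rightarrow> 'a \<Rightarrow> 'a" where
  "commutator G x y = x \<otimes>\<^bsub>G\<^esub> y \<otimes>\<^bsub>G\<^esub> inv\<^bsub>G\<^esub> x \<otimes>\<^bsub>G\<^esub> inv\<^bsub>G\<^esub> y"

definition isoclinic :: "('a, 'b) monoid_scheme \<Rightarrow> ('c, 'd) monoid_scheme \<Rightarrow> bool" where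
  "isoclinic G H \<longleftrightarrow>
     (\<exists>\<theta> \<phi>.
        \<theta> \<in> iso (G Mod grp_center G) (H Mod grp_center H) \<and>
        \<phi> \<in> iso (G\<lparr>carrier := derived G (carrier G)\<rparr>) (H\<lparr>carrier := derived H (carrier H)\<rparr>) \<and>
        (\<forall>g1 \<in> carrier G. \<forall>g2 \<in> carrier G. \<forall>h1 \<in> carrier H. \<forall>h2 \<in> carrier H.
           \<theta> (grp_center G #>\<^bsub>G\<^esub> g1) = grp_center H #>\<^bsub>H\<^esub> h1 \<and>
           \<theta> (grp_center G #>\<^bsub>G\<^esub> g2) = grp_center H #>\<^bsub>H\<^esub> h2 \<longrightarrow>
           \<phi> (commutator G g1 g2) = commutator H h1 h2))"

definition tuples :: "('a, 'b) monoid_scheme \<Rightarrow> nat \<Rightarrow> (nat \<Rightarrow> 'a) set" where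
  "tuples G n = {0..<n} \<rightarrow>\<^sub>E carrier G"

definition commuting_tuples :: "('a, 'b) monoid_scheme \<Rightarrow> nat \<Rightarrow> (nat \<Rightarrow> 'a) set" where
  "commuting_tuples G n = {x \<in> tuples G n.
      \<forall>i<n. \<forall>j<n. x i \<otimes>\<^bsub>G\<^esub> x j = x j \<otimes>\<^bsub>G\<^esub> x i}"

definition conj_tuple :: "('a, 'b) monoid_scheme \<Rightarrow> nat \<Rightarrow> 'a \<Rightarrow> (nat \<Rightarrow> 'a) \<Rightarrow> (nat \<Rightarrow> 'a)" where
  "conj_tuple G n g x = (\<lambda>i. if i < n then g \<otimes>\<^bsub>G\<^esub> x i \<otimes>\<^bsub>G\<^esub> inv\<^bsub>G\<^esub> g else undefined)"

definition conj_orbits :: "('a, 'b) monoid_scheme \<Rightarrow> nat \<Rightarrow> (nat \<Rightarrow> 'a) set \<Rightarrow> (nat \<Rightarrow> 'a) set set" where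
  "conj_orbits G n S = (\<lambda>t. (\<lambda>a. conj_tuple G n a t) ` carrier G) ` S"



definition alpha :: "('a, 'b) monoid_scheme \<Rightarrow> nat \<Rightarrow> nat" where
  "alpha G n = card (conj_orbits G n (tuples G n))"

definition beta :: "('a, 'b) monoid_scheme \<Rightarrow> nat \<Rightarrow> nat" where
  "beta G n = card (conj_orbits G n (commuting_tuples G n))"

definition A_fps :: "('a, 'b) monoid_scheme \<Rightarrow> rat fps" where
  "A_fps G = Abs_fps (\<lambda>n. of_nat (alpha G n))"

definition B_fps :: "('a, 'b) monoid_scheme \<Rightarrow> rat fps" where
  "B_fps G = Abs_fps (\<lambda>n. of_nat (beta G n))"

definition subst_scaled :: "rat fps \<Rightarrow> nat \<Rightarrow> rat fps" where
  "subst_scaled F m = F oo (fps_const (1 / of_nat m) * fps_X)"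

end

theory Submission
  imports Defs
begin

(* By Burnside's lemma, |G| alpha_{G,n} and |G| beta_{G,n} count the (n+1)-tuples of elements
   of G whose entries commute along a fixed graph on the indices: the last entry commutes with
   all others, resp. all entries commute pairwise.  Whether two elements commute depends only
   on their cosets modulo Z(G), so such a k-tuple count is |Z(G)|^k times the number of k-tuples
   of cosets that commute along the graph.  An isoclinism matches the cosets of G and H so that
   g1, g2 commute iff [g1,g2] = 1 iff [h1,h2] = 1 iff h1, h2 commute; hence the coset counts of
   G and H agree, |G/Z(G)| = |H/Z(H)|, and the k-tuple count divided by |G|^k is a family
   invariant.  The coefficient of t^n in A_G(t/|G|) is alpha_{G,n}/|G|^n, i.e. such a count
   for k = n + 1. *)

lemma (in group) group_actionI:
  assumes closed: "\<And>g x. g \<in> carrier G \<Longrightarrow> x \<in> E \<Longrightarrow> act g x \<in> E"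
    and one: "\<And>x. x \<in> E \<Longrightarrow> act \<one> x = x"
    and mult: "\<And>g h x. g \<in> carrier G \<Longrightarrow> h \<in> carrier G \<Longrightarrow> x \<in> E \<Longrightarrow>
                 act (g \<otimes> h) x = act g (act h x)"
  shows "group_action G E (\<lambda>g. \<lambda>x\<in>E. act g x)"
proof -
  have cancel: "act (inv g) (act g x) = x" if "g \<in> carrier G" "x \<in> E" for g x
    using that by (metis inv_closed l_inv mult one)
  have bij: "(\<lambda>x\<in>E. act g x) \<in> Bij E" if g: "g \<in> carrier G" for g
    unfolding Bij_def using g closed cancel[of g] cancel[of "inv g"]
    by (auto intro!: bij_betw_byWitness[where f' = "act (inv g)"])
  have "(\<lambda>g. \<lambda>x\<in>E. act g x) \<in> hom G (BijGroup E)"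
  proof (rule homI)
    show "(\<lambda>x\<in>E. act g x) \<in> carrier (BijGroup E)" if "g \<in> carrier G" for g
      using bij[OF that] by (simp add: BijGroup_def)
    show "(\<lambda>x\<in>E. act (g \<otimes> h) x) = (\<lambda>x\<in>E. act g x) \<otimes>\<^bsub>BijGroup E\<^esub> (\<lambda>x\<in>E. act h x)"
      if "g \<in> carrier G" "h \<in> carrier G" for g h
      using that bij closed by (auto simp: BijGroup_def compose_def mult fun_eq_iff)
  qed
  then show ?thesis
    by (simp add: group_action_def group_hom_def group_hom_axioms_def group_BijGroup is_group)
qed

definition related_tuples ::
    "'a set \<Rightarrow> ('a \<Rightarrow> 'a \<Rightarrow> bool) \<Rightarrow> 'i set \<Rightarrow> ('i \<Rightarrow> 'i \<Rightarrow> bool) \<Rightarrow> ('i \<Rightarrow> 'a) set" where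
  "related_tuples A P I E = {x \<in> I \<rightarrow>\<^sub>E A. \<forall>i\<in>I. \<forall>j\<in>I. E i j \<longrightarrow> P (x i) (x j)}"

lemma related_tuples_map:
  assumes f: "f \<in> A \<rightarrow> B" and PQ: "\<And>a b. a \<in> A \<Longrightarrow> b \<in> A \<Longrightarrow> P a b \<Longrightarrow> Q (f a) (f b)"
    and x: "x \<in> related_tuples A P I E"
  shows "(\<lambda>i\<in>I. f (x i)) \<in> related_tuples B Q I E"
  using assms by (auto simp: related_tuples_def PiE_iff Pi_iff intro!: PQ)

lemma card_related_tuples_bij:
  assumes f: "bij_betw f A B"
    and PQ: "\<And>a b. a \<in> A \<Longrightarrow> b \<in> A \<Longrightarrow> P a b \<longleftrightarrow> Q (f a) (f b)"
  shows "card (related_tuples A P I E) = card (related_tuples B Q I E)"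
proof (rule bij_betw_same_card)
  let ?g = "inv_into A f"
  have g: "?g \<in> B \<rightarrow> A" and gf: "\<And>a. a \<in> A \<Longrightarrow> ?g (f a) = a" and fg: "\<And>b. b \<in> B \<Longrightarrow> f (?g b) = b"
    using f by (auto simp: bij_betw_def f_inv_into_f inv_into_into)
  have QP: "Q a b \<Longrightarrow> P (?g a) (?g b)" if "a \<in> B" "b \<in> B" for a b
    using PQ[of "?g a" "?g b"] g fg that by auto
  show "bij_betw (\<lambda>x. \<lambda>i\<in>I. f (x i)) (related_tuples A P I E) (related_tuples B Q I E)"
  proof (rule bij_betw_byWitness[where f' = "\<lambda>y. \<lambda>i\<in>I. ?g (y i)"])
    show "(\<lambda>x. \<lambda>i\<in>I. f (x i)) ` related_tuples A P I E \<subseteq> related_tuples B Q I E"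
      using related_tuples_map[of f A B P Q] f PQ by (auto simp: bij_betw_def)
    show "(\<lambda>y. \<lambda>i\<in>I. ?g (y i)) ` related_tuples B Q I E \<subseteq> related_tuples A P I E"
      using related_tuples_map[of ?g B A Q P] g QP by auto
  qed (auto simp: related_tuples_def gf fg fun_eq_iff PiE_def extensional_def Pi_def)
qed

lemma related_tuples_eq_UN_blocks:
  assumes cover: "\<Union>\<C> = A"
    and PQ: "\<And>C D a b. C \<in> \<C> \<Longrightarrow> D \<in> \<C> \<Longrightarrow> a \<in> C \<Longrightarrow> b \<in> D \<Longrightarrow> P a b \<longleftrightarrow> Q C D"
  shows "related_tuples A P I E = (\<Union>q\<in>related_tuples \<C> Q I E. Pi\<^sub>E I q)"
proof (intro equalityI subsetI)
  fix x assume x: "x \<in> related_tuples A P I E"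
  define block where "block a = (SOME C. C \<in> \<C> \<and> a \<in> C)" for a
  have block: "block a \<in> \<C>" "a \<in> block a" if "a \<in> A" for a
    unfolding block_def using that cover someI_ex[of "\<lambda>C. C \<in> \<C> \<and> a \<in> C"] by blast+
  have "block \<in> A \<rightarrow> \<C>" using block by blast
  then have "(\<lambda>i\<in>I. block (x i)) \<in> related_tuples \<C> Q I E"
    by (rule related_tuples_map[OF _ _ x]) (use block PQ in blast)
  moreover have "x \<in> Pi\<^sub>E I (\<lambda>i\<in>I. block (x i))"
    using x block by (auto simp: related_tuples_def PiE_iff)
  ultimately show "x \<in> (\<Union>q\<in>related_tuples \<C> Q I E. Pi\<^sub>E I q)" by blast
next
  fix x assume "x \<in> (\<Union>q\<in>related_tuples \<C> Q I E. Pi\<^sub>E I q)"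
  then obtain q where q: "q \<in> related_tuples \<C> Q I E" and x: "x \<in> Pi\<^sub>E I q" by blast
  have xq: "x i \<in> q i" "q i \<in> \<C>" if "i \<in> I" for i
    using x q that by (auto simp: related_tuples_def)
  then have "x \<in> I \<rightarrow>\<^sub>E A"
    using x cover by (auto simp: PiE_iff)
  moreover have "P (x i) (x j)" if "i \<in> I" "j \<in> I" "E i j" for i j
    using PQ[OF xq(2)[OF that(1)] xq(2)[OF that(2)] xq(1)[OF that(1)] xq(1)[OF that(2)]] q that
    by (auto simp: related_tuples_def)
  ultimately show "x \<in> related_tuples A P I E"
    by (simp add: related_tuples_def)
qed

lemma card_related_tuples_blocks:
  assumes I: "finite I" and A: "finite A"
    and cover: "\<Union>\<C> = A" and disj: "pairwise disjnt \<C>" and size: "\<And>C. C \<in> \<C> \<Longrightarrow> card C = k"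
    and PQ: "\<And>C D a b. C \<in> \<C> \<Longrightarrow> D \<in> \<C> \<Longrightarrow> a \<in> C \<Longrightarrow> b \<in> D \<Longrightarrow> P a b \<longleftrightarrow> Q C D"
  shows "card (related_tuples A P I E) = card (related_tuples \<C> Q I E) * k ^ card I"
proof -
  have blocks: "q i \<in> \<C>" if "q \<in> related_tuples \<C> Q I E" "i \<in> I" for q i
    using that by (auto simp: related_tuples_def)
  have "finite \<C>" using A cover by (simp add: finite_UnionD)
  then have fin: "finite (related_tuples \<C> Q I E)"
    by (auto simp: related_tuples_def intro!: finite_subset[of _ "I \<rightarrow>\<^sub>E \<C>"] finite_PiE[OF I])
  have finite_fibre: "finite (Pi\<^sub>E I q)" if "q \<in> related_tuples \<C> Q I E" for q
  proof (rule finite_PiE[OF I])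
    show "finite (q i)" if "i \<in> I" for i
      using blocks[OF \<open>q \<in> related_tuples \<C> Q I E\<close> that] cover A by (auto intro: rev_finite_subset)
  qed
  have disjoint_fibres: "Pi\<^sub>E I q \<inter> Pi\<^sub>E I q' = {}"
    if "q \<in> related_tuples \<C> Q I E" "q' \<in> related_tuples \<C> Q I E" "q \<noteq> q'" for q q'
  proof -
    have "q \<in> I \<rightarrow>\<^sub>E \<C>" "q' \<in> I \<rightarrow>\<^sub>E \<C>"
      using that(1,2) by (simp_all add: related_tuples_def)
    then obtain i where "i \<in> I" "q i \<noteq> q' i"
      using \<open>q \<noteq> q'\<close> by (meson PiE_ext)
    then have "disjnt (q i) (q' i)"
      using disj blocks[OF that(1)] blocks[OF that(2)] by (simp add: pairwise_def)
    then show ?thesis using \<open>i \<in> I\<close> by (auto simp: disjnt_def)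
  qed
  have union: "related_tuples A P I E = (\<Union>q\<in>related_tuples \<C> Q I E. Pi\<^sub>E I q)"
    using cover PQ by (rule related_tuples_eq_UN_blocks)
  have "card (related_tuples A P I E) = (\<Sum>q\<in>related_tuples \<C> Q I E. card (Pi\<^sub>E I q))"
    unfolding union using finite_fibre disjoint_fibres by (intro card_UN_disjoint[OF fin]) auto
  also have "\<dots> = (\<Sum>q\<in>related_tuples \<C> Q I E. k ^ card I)"
    using blocks size by (intro sum.cong) (simp_all add: card_PiE I)
  finally show ?thesis by simp
qed

abbreviation commuting_tuples_on :: "('a, 'b) monoid_scheme \<Rightarrow> 'i set \<Rightarrow> ('i \<Rightarrow> 'i \<Rightarrow> bool) \<Rightarrow> ('i \<Rightarrow> 'a) set"
  where "commuting_tuples_on G I E \<equiv> related_tuples (carrier G) (\<lambda>a b. a \<otimes>\<^bsub>G\<^esub> b = b \<otimes>\<^bsub>G\<^esub> a) I E"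

definition cosets_commute :: "('a, 'b) monoid_scheme \<Rightarrow> 'a set \<Rightarrow> 'a set \<Rightarrow> bool" where
  "cosets_commute G C D \<longleftrightarrow> (\<forall>a\<in>C. \<forall>b\<in>D. a \<otimes>\<^bsub>G\<^esub> b = b \<otimes>\<^bsub>G\<^esub> a)"

lemma (in group) grp_center_subgroup: "subgroup (grp_center G) G"
proof
  show "grp_center G \<subseteq> carrier G" and "\<one> \<in> grp_center G"
    by (auto simp: grp_center_def)
next
  fix x y assume "x \<in> grp_center G" "y \<in> grp_center G"
  then have x: "x \<in> carrier G" "\<And>g. g \<in> carrier G \<Longrightarrow> x \<otimes> g = g \<otimes> x"
    and y: "y \<in> carrier G" "\<And>g. g \<in> carrier G \<Longrightarrow> y \<otimes> g = g \<otimes> y"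
    by (auto simp: grp_center_def)
  have "x \<otimes> y \<otimes> g = g \<otimes> (x \<otimes> y)" if g: "g \<in> carrier G" for g
  proof -
    have "x \<otimes> y \<otimes> g = x \<otimes> (g \<otimes> y)" using x(1) y g by (simp add: m_assoc)
    also have "\<dots> = g \<otimes> (x \<otimes> y)" using x(1) y(1) g by (simp add: m_assoc[symmetric] x(2)[OF g])
    finally show ?thesis .
  qed
  then show "x \<otimes> y \<in> grp_center G"
    using x(1) y(1) by (simp add: grp_center_def)
next
  fix x assume "x \<in> grp_center G"
  then have x: "x \<in> carrier G" "\<And>g. g \<in> carrier G \<Longrightarrow> x \<otimes> g = g \<otimes> x"
    by (auto simp: grp_center_def)
  have "inv x \<otimes> g = g \<otimes> inv x" if g: "g \<in> carrier G" for g
  proof -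
    have "x \<otimes> (g \<otimes> inv x) = g"
      using x(1) g by (simp add: m_assoc[symmetric] x(2)[OF g]) (simp add: m_assoc)
    then show ?thesis
      using x(1) g by (metis inv_closed inv_solve_left m_closed)
  qed
  then show "inv x \<in> grp_center G"
    using x(1) by (simp add: grp_center_def)
qed

lemma (in group) commute_in_center_cosets_iff:
  assumes g: "g \<in> carrier G" and h: "h \<in> carrier G"
    and a: "a \<in> grp_center G #> g" and b: "b \<in> grp_center G #> h"
  shows "a \<otimes> b = b \<otimes> a \<longleftrightarrow> g \<otimes> h = h \<otimes> g"
proof -
  obtain z w where z: "z \<in> grp_center G" "a = z \<otimes> g" and w: "w \<in> grp_center G" "b = w \<otimes> h"
    using a b by (auto simp: r_coset_def)
  have zw: "z \<in> carrier G" "w \<in> carrier G" "\<And>x. x \<in> carrier G \<Longrightarrow> z \<otimes> x = x \<otimes> z"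
    "\<And>x. x \<in> carrier G \<Longrightarrow> w \<otimes> x = x \<otimes> w"
    using z(1) w(1) by (auto simp: grp_center_def)
  have "a \<otimes> b = z \<otimes> ((g \<otimes> w) \<otimes> h)"
    using g h zw(1,2) by (simp add: z(2) w(2) m_assoc)
  also have "\<dots> = z \<otimes> ((w \<otimes> g) \<otimes> h)"
    by (simp only: zw(4)[OF g])
  also have "\<dots> = (z \<otimes> w) \<otimes> (g \<otimes> h)"
    using g h zw(1,2) by (simp add: m_assoc)
  finally have ab: "a \<otimes> b = (z \<otimes> w) \<otimes> (g \<otimes> h)" .
  have "b \<otimes> a = w \<otimes> ((h \<otimes> z) \<otimes> g)"
    using g h zw(1,2) by (simp add: z(2) w(2) m_assoc)
  also have "\<dots> = w \<otimes> ((z \<otimes> h) \<otimes> g)"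
    by (simp only: zw(3)[OF h])
  also have "\<dots> = (w \<otimes> z) \<otimes> (h \<otimes> g)"
    using g h zw(1,2) by (simp add: m_assoc)
  also have "\<dots> = (z \<otimes> w) \<otimes> (h \<otimes> g)"
    by (simp only: zw(3)[OF zw(2)])
  finally have ba: "b \<otimes> a = (z \<otimes> w) \<otimes> (h \<otimes> g)" .
  show ?thesis
    unfolding ab ba by (rule Units_l_cancel) (use g h zw(1,2) in \<open>auto simp: Units_eq\<close>)
qed

lemma (in group) cosets_commute_center_rcos_iff:
  assumes "g \<in> carrier G" "h \<in> carrier G"
  shows "cosets_commute G (grp_center G #> g) (grp_center G #> h) \<longleftrightarrow> g \<otimes> h = h \<otimes> g"
  using assms commute_in_center_cosets_iff rcos_self[OF _ grp_center_subgroup]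
  unfolding cosets_commute_def by blast

lemma (in group) card_commuting_tuples_on:
  assumes "finite (carrier G)" "finite I"
  shows "card (commuting_tuples_on G I E) =
    card (related_tuples (rcosets (grp_center G)) (cosets_commute G) I E) * card (grp_center G) ^ card I"
proof (rule card_related_tuples_blocks[OF assms(2,1)])
  show "\<Union>(rcosets grp_center G) = carrier G" "pairwise disjnt (rcosets grp_center G)"
    using rcosets_part_G rcos_disjoint grp_center_subgroup by auto
  show "card C = card (grp_center G)" if "C \<in> rcosets grp_center G" for C
    using card_rcosets_equal[OF that] subgroup.subset[OF grp_center_subgroup] by simp
  show "a \<otimes> b = b \<otimes> a \<longleftrightarrow> cosets_commute G C D"
    if "C \<in> rcosets grp_center G" "D \<in> rcosets grp_center G" "a \<in> C" "b \<in> D" for C D a b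
    using that commute_in_center_cosets_iff cosets_commute_center_rcos_iff
    by (auto simp: RCOSETS_def)
qed

lemma (in group) commuting_tuples_on_density:
  assumes "finite (carrier G)" "finite I"
  shows "(of_nat (card (commuting_tuples_on G I E)) / of_nat (order G) ^ card I :: 'k :: field_char_0) =
    of_nat (card (related_tuples (rcosets (grp_center G)) (cosets_commute G) I E)) /
    of_nat (card (rcosets (grp_center G))) ^ card I"
proof -
  have "order G = card (rcosets (grp_center G)) * card (grp_center G)"
    using lagrange[OF grp_center_subgroup] by simp
  moreover have "card (grp_center G) \<noteq> 0"
    using assms(1) subgroup.one_closed[OF grp_center_subgroup]
      subgroup.subset[OF grp_center_subgroup] by (auto simp: card_eq_0_iff finite_subset)
  ultimately show ?thesis
    by (simp add: card_commuting_tuples_on[OF assms] power_mult_distrib)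
qed

lemma (in group) commutator_eq_one_iff:
  assumes "x \<in> carrier G" "y \<in> carrier G"
  shows "commutator G x y = \<one> \<longleftrightarrow> x \<otimes> y = y \<otimes> x"
proof -
  have "commutator G x y = \<one> \<longleftrightarrow> x \<otimes> y \<otimes> inv x = y"
    using assms by (simp add: commutator_def inv_solve_right')
  also have "\<dots> \<longleftrightarrow> x \<otimes> y = y \<otimes> x"
    using assms by (simp add: inv_solve_right')
  finally show ?thesis .
qed

lemma (in group) commutator_in_derived:
  assumes "x \<in> carrier G" "y \<in> carrier G"
  shows "commutator G x y \<in> derived G (carrier G)"
  unfolding derived_def commutator_def using assms by (blast intro: generate.incl)

lemma isoclinic_cosets_commute:
  assumes G: "group G" and H: "group H" and "isoclinic G H"
  obtains \<theta> where "bij_betw \<theta> (rcosets\<^bsub>G\<^esub> grp_center G) (rcosets\<^bsub>H\<^esub> grp_center H)"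
    and "\<And>C D. C \<in> rcosets\<^bsub>G\<^esub> grp_center G \<Longrightarrow> D \<in> rcosets\<^bsub>G\<^esub> grp_center G \<Longrightarrow>
           cosets_commute G C D \<longleftrightarrow> cosets_commute H (\<theta> C) (\<theta> D)"
proof -
  interpret G: group G by fact
  interpret H: group H by fact
  obtain \<theta> \<phi> where \<theta>: "\<theta> \<in> iso (G Mod grp_center G) (H Mod grp_center H)"
    and \<phi>: "\<phi> \<in> iso (G\<lparr>carrier := derived G (carrier G)\<rparr>) (H\<lparr>carrier := derived H (carrier H)\<rparr>)"
    and comm: "\<And>g1 g2 h1 h2. \<lbrakk>g1 \<in> carrier G; g2 \<in> carrier G; h1 \<in> carrier H; h2 \<in> carrier H;
        \<theta> (grp_center G #>\<^bsub>G\<^esub> g1) = grp_center H #>\<^bsub>H\<^esub> h1;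
        \<theta> (grp_center G #>\<^bsub>G\<^esub> g2) = grp_center H #>\<^bsub>H\<^esub> h2\<rbrakk>
        \<Longrightarrow> \<phi> (commutator G g1 g2) = commutator H h1 h2"
    using \<open>isoclinic G H\<close> unfolding isoclinic_def by blast
  have bij: "bij_betw \<theta> (rcosets\<^bsub>G\<^esub> grp_center G) (rcosets\<^bsub>H\<^esub> grp_center H)"
    using \<theta> by (simp add: iso_def FactGroup_def)
  have groups: "group (G\<lparr>carrier := derived G (carrier G)\<rparr>)" "group (H\<lparr>carrier := derived H (carrier H)\<rparr>)"
    by (simp_all add: G.subgroup_imp_group G.derived_is_subgroup H.subgroup_imp_group H.derived_is_subgroup)
  have \<phi>_one: "\<phi> \<one>\<^bsub>G\<^esub> = \<one>\<^bsub>H\<^esub>"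
    using hom_one[OF iso_imp_homomorphism[OF \<phi>] groups] by simp
  have \<phi>_inj: "inj_on \<phi> (derived G (carrier G))"
    using \<phi> by (simp add: iso_def bij_betw_def)
  have "cosets_commute G C D \<longleftrightarrow> cosets_commute H (\<theta> C) (\<theta> D)"
    if C: "C \<in> rcosets\<^bsub>G\<^esub> grp_center G" and D: "D \<in> rcosets\<^bsub>G\<^esub> grp_center G" for C D
  proof -
    obtain g1 g2 where g: "g1 \<in> carrier G" "g2 \<in> carrier G"
      and C_eq: "C = grp_center G #>\<^bsub>G\<^esub> g1" and D_eq: "D = grp_center G #>\<^bsub>G\<^esub> g2"
      using C D by (auto simp: RCOSETS_def)
    obtain h1 h2 where h: "h1 \<in> carrier H" "h2 \<in> carrier H"
      and \<theta>C: "\<theta> C = grp_center H #>\<^bsub>H\<^esub> h1" and \<theta>D: "\<theta> D = grp_center H #>\<^bsub>H\<^esub> h2"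
      using bij_betw_apply[OF bij C] bij_betw_apply[OF bij D] by (auto simp: RCOSETS_def)
    have "cosets_commute G C D \<longleftrightarrow> commutator G g1 g2 = \<one>\<^bsub>G\<^esub>"
      unfolding C_eq D_eq using g by (simp add: G.cosets_commute_center_rcos_iff G.commutator_eq_one_iff)
    also have "\<dots> \<longleftrightarrow> \<phi> (commutator G g1 g2) = \<phi> \<one>\<^bsub>G\<^esub>"
      using inj_on_eq_iff[OF \<phi>_inj] G.commutator_in_derived[OF g] G.derived_is_subgroup[of "carrier G"]
      by (simp add: subgroup.one_closed)
    also have "\<dots> \<longleftrightarrow> commutator H h1 h2 = \<one>\<^bsub>H\<^esub>"
      using comm[OF g h] C_eq D_eq \<theta>C \<theta>D \<phi>_one by simp
    also have "\<dots> \<longleftrightarrow> cosets_commute H (\<theta> C) (\<theta> D)"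
      unfolding \<theta>C \<theta>D using h by (simp add: H.cosets_commute_center_rcos_iff H.commutator_eq_one_iff)
    finally show ?thesis .
  qed
  with bij show ?thesis by (rule that)
qed

lemma isoclinic_commuting_tuples_on_density:
  assumes G: "group G" "finite (carrier G)" and H: "group H" "finite (carrier H)"
    and "isoclinic G H" and I: "finite I"
  shows "(of_nat (card (commuting_tuples_on G I E)) / of_nat (order G) ^ card I :: 'k :: field_char_0) =
    of_nat (card (commuting_tuples_on H I E)) / of_nat (order H) ^ card I"
proof -
  obtain \<theta> where \<theta>: "bij_betw \<theta> (rcosets\<^bsub>G\<^esub> grp_center G) (rcosets\<^bsub>H\<^esub> grp_center H)"
    and comm: "\<And>C D. C \<in> rcosets\<^bsub>G\<^esub> grp_center G \<Longrightarrow> D \<in> rcosets\<^bsub>G\<^esub> grp_center G \<Longrightarrow>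
           cosets_commute G C D \<longleftrightarrow> cosets_commute H (\<theta> C) (\<theta> D)"
    using isoclinic_cosets_commute[OF G(1) H(1) \<open>isoclinic G H\<close>] by blast
  have "card (related_tuples (rcosets\<^bsub>G\<^esub> grp_center G) (cosets_commute G) I E) =
      card (related_tuples (rcosets\<^bsub>H\<^esub> grp_center H) (cosets_commute H) I E)"
    using \<theta> comm by (rule card_related_tuples_bij)
  then show ?thesis
    by (simp add: group.commuting_tuples_on_density[OF G I] group.commuting_tuples_on_density[OF H I]
        bij_betw_same_card[OF \<theta>])
qed

lemma (in group) conj_tuple_fixed_iff:
  assumes "g \<in> carrier G" "x \<in> {0..<n} \<rightarrow>\<^sub>E carrier G"
  shows "conj_tuple G n g x = x \<longleftrightarrow> (\<forall>i<n. g \<otimes> x i = x i \<otimes> g)"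
proof -
  have "conj_tuple G n g x = x \<longleftrightarrow> (\<forall>i<n. g \<otimes> x i \<otimes> inv g = x i)"
    using assms(2) by (auto simp: conj_tuple_def fun_eq_iff PiE_def extensional_def)
  also have "\<dots> \<longleftrightarrow> (\<forall>i<n. g \<otimes> x i = x i \<otimes> g)"
    using assms by (auto simp: inv_solve_right' PiE_iff)
  finally show ?thesis .
qed

lemma (in group) conj_tuple_in_commuting_tuples_on:
  assumes g: "g \<in> carrier G" and x: "x \<in> commuting_tuples_on G {0..<n} E"
  shows "conj_tuple G n g x \<in> commuting_tuples_on G {0..<n} E"
proof -
  have conj_mult: "(g \<otimes> a \<otimes> inv g) \<otimes> (g \<otimes> b \<otimes> inv g) = g \<otimes> (a \<otimes> b) \<otimes> inv g"
    if "a \<in> carrier G" "b \<in> carrier G" for a b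
  proof -
    have "inv g \<otimes> (g \<otimes> y) = y" if "y \<in> carrier G" for y
      using g that by (simp add: m_assoc[symmetric])
    then show ?thesis using g that by (simp add: m_assoc)
  qed
  show ?thesis
    using x g by (auto simp: related_tuples_def conj_tuple_def PiE_iff extensional_def conj_mult)
qed

lemma (in group) conj_tuple_action:
  "group_action G (commuting_tuples_on G {0..<n} E)
     (\<lambda>g. \<lambda>x\<in>commuting_tuples_on G {0..<n} E. conj_tuple G n g x)"
proof (rule group_actionI)
  show "conj_tuple G n \<one> x = x" if "x \<in> commuting_tuples_on G {0..<n} E" for x
    using that by (auto simp: related_tuples_def conj_tuple_def fun_eq_iff PiE_def Pi_iff extensional_def)
  show "conj_tuple G n (g \<otimes> h) x = conj_tuple G n g (conj_tuple G n h x)"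
    if "g \<in> carrier G" "h \<in> carrier G" "x \<in> commuting_tuples_on G {0..<n} E" for g h x
    using that by (auto simp: related_tuples_def conj_tuple_def PiE_iff inv_mult_group m_assoc)
qed (rule conj_tuple_in_commuting_tuples_on)

lemma (in group) extended_tuple_commuting_iff:
  assumes g: "g \<in> carrier G" and x: "x \<in> {0..<n} \<rightarrow>\<^sub>E carrier G"
  shows "x(n := g) \<in> commuting_tuples_on G {0..<Suc n} (\<lambda>i j. i = n \<or> j = n \<or> E i j) \<longleftrightarrow>
    x \<in> commuting_tuples_on G {0..<n} E \<and> conj_tuple G n g x = x"
    (is "?y \<in> ?T \<longleftrightarrow> _")
proof -
  have "?y \<in> {0..<Suc n} \<rightarrow>\<^sub>E carrier G"
    using g x by (auto simp: PiE_iff extensional_def)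
  then have "?y \<in> ?T \<longleftrightarrow> (\<forall>i\<in>{0..<Suc n}. \<forall>j\<in>{0..<Suc n}.
      (i = n \<or> j = n \<or> E i j) \<longrightarrow> ?y i \<otimes> ?y j = ?y j \<otimes> ?y i)"
    unfolding related_tuples_def by blast
  also have "\<dots> \<longleftrightarrow>
      (\<forall>i\<in>{0..<n}. \<forall>j\<in>{0..<n}. E i j \<longrightarrow> x i \<otimes> x j = x j \<otimes> x i) \<and> (\<forall>i<n. g \<otimes> x i = x i \<otimes> g)"
    (is "?lhs \<longleftrightarrow> ?E \<and> ?C")
  proof
    assume h: ?lhs
    have "x i \<otimes> x j = x j \<otimes> x i" if "i < n" "j < n" "E i j" for i j
      using h[rule_format, of i j] that by simp
    moreover have "g \<otimes> x i = x i \<otimes> g" if "i < n" for i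
      using h[rule_format, of n i] that by simp
    ultimately show "?E \<and> ?C" by auto
  next
    assume "?E \<and> ?C"
    then have E: ?E and C: ?C by blast+
    show ?lhs
    proof (intro ballI impI)
      fix i j assume "i \<in> {0..<Suc n}" "j \<in> {0..<Suc n}" "i = n \<or> j = n \<or> E i j"
      then consider "i = n" "j = n" | "i = n" "j < n" | "i < n" "j = n" | "i < n" "j < n" "E i j"
        by fastforce
      then show "?y i \<otimes> ?y j = ?y j \<otimes> ?y i"
        by cases (auto simp: C[rule_format] intro: E[rule_format])
    qed
  qed
  finally show ?thesis
    using x conj_tuple_fixed_iff[OF g x] by (auto simp: related_tuples_def)
qed

lemma (in group) commuting_tuples_on_Suc_eq_image:
  "commuting_tuples_on G {0..<Suc n} (\<lambda>i j. i = n \<or> j = n \<or> E i j) =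
    (\<lambda>(g, x). x(n := g)) `
      {(g, x). g \<in> carrier G \<and> x \<in> commuting_tuples_on G {0..<n} E \<and> conj_tuple G n g x = x}"
    (is "?T = ?ext ` ?Fix")
proof (intro equalityI subsetI)
  fix y assume y: "y \<in> ?T"
  then have "y \<in> Pi\<^sub>E (insert n {0..<n}) (\<lambda>_. carrier G)"
    by (simp add: related_tuples_def atLeastLessThanSuc)
  then obtain g x where g: "g \<in> carrier G" and x: "x \<in> {0..<n} \<rightarrow>\<^sub>E carrier G"
    and y_eq: "y = x(n := g)"
    unfolding PiE_insert_eq by auto
  then have "(g, x) \<in> ?Fix"
    using y extended_tuple_commuting_iff[OF g x] by simp
  then show "y \<in> ?ext ` ?Fix"
    unfolding y_eq by (rule rev_image_eqI) simp
next
  fix y assume "y \<in> ?ext ` ?Fix"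
  then obtain g x where g: "g \<in> carrier G" and "x \<in> commuting_tuples_on G {0..<n} E"
    "conj_tuple G n g x = x" "y = x(n := g)"
    by auto
  moreover have x: "x \<in> {0..<n} \<rightarrow>\<^sub>E carrier G"
    using \<open>x \<in> commuting_tuples_on G {0..<n} E\<close> by (simp add: related_tuples_def)
  ultimately show "y \<in> ?T"
    by (simp add: extended_tuple_commuting_iff[OF g x])
qed

lemma (in group) card_conj_orbits_commuting_tuples_on:
  assumes fin: "finite (carrier G)"
  shows "card (conj_orbits G n (commuting_tuples_on G {0..<n} E)) * order G =
    card (commuting_tuples_on G {0..<Suc n} (\<lambda>i j. i = n \<or> j = n \<or> E i j))"
proof -
  let ?Y = "commuting_tuples_on G {0..<n} E"
  let ?act = "\<lambda>g. \<lambda>x\<in>?Y. conj_tuple G n g x"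
  let ?Fix = "SIGMA g:carrier G. invariants ?Y ?act g"
  interpret group_action G ?Y ?act by (rule conj_tuple_action)
  have Y: "?Y \<subseteq> {0..<n} \<rightarrow>\<^sub>E carrier G"
    by (auto simp: related_tuples_def)
  have finY: "finite ?Y"
    by (rule finite_subset[OF Y finite_PiE]) (use fin in auto)
  have Fix: "?Fix = {(g, x). g \<in> carrier G \<and> x \<in> ?Y \<and> conj_tuple G n g x = x}"
    by (auto simp: invariants_def)
  have "conj_orbits G n ?Y = orbits G ?Y ?act"
    unfolding conj_orbits_def orbits_def Setcompr_eq_image
    by (rule image_cong) (auto simp: orbit_def)
  then have "card (conj_orbits G n ?Y) * order G = (\<Sum>g\<in>carrier G. card (invariants ?Y ?act g))"
    using burnside[OF fin finY] by simp
  also have "\<dots> = card ?Fix"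
    by (rule card_SigmaI[symmetric]) (use fin finY in \<open>auto simp: invariants_def\<close>)
  also have "\<dots> = card ((\<lambda>(g, x). x(n := g)) ` ?Fix)"
  proof (rule card_image[symmetric], rule inj_on_subset)
    show "inj_on (\<lambda>(g, x). x(n := g)) (carrier G \<times> ({0..<n} \<rightarrow>\<^sub>E carrier G))"
      by (rule inj_combinator) simp
    show "?Fix \<subseteq> carrier G \<times> ({0..<n} \<rightarrow>\<^sub>E carrier G)"
      using Y unfolding Fix by blast
  qed
  finally show ?thesis
    unfolding Fix commuting_tuples_on_Suc_eq_image .
qed

lemma (in group) conj_orbits_density:
  assumes "finite (carrier G)"
  shows "(of_nat (card (conj_orbits G n (commuting_tuples_on G {0..<n} E))) / of_nat (order G) ^ n
      :: 'k :: field_char_0) =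
    of_nat (card (commuting_tuples_on G {0..<Suc n} (\<lambda>i j. i = n \<or> j = n \<or> E i j))) /
    of_nat (order G) ^ card {0..<Suc n}"
proof -
  have "order G \<noteq> 0"
    using assms order_gt_0_iff_finite by simp
  then show ?thesis
    by (simp flip: card_conj_orbits_commuting_tuples_on[OF assms])
qed

lemma isoclinic_conj_orbits_density:
  assumes G: "group G" "finite (carrier G)" and H: "group H" "finite (carrier H)"
    and "isoclinic G H"
  shows "(of_nat (card (conj_orbits G n (commuting_tuples_on G {0..<n} E))) / of_nat (order G) ^ n
      :: 'k :: field_char_0) =
    of_nat (card (conj_orbits H n (commuting_tuples_on H {0..<n} E))) / of_nat (order H) ^ n"
  unfolding group.conj_orbits_density[OF G] group.conj_orbits_density[OF H]
  using assms by (intro isoclinic_commuting_tuples_on_density) simp_all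

lemma tuples_eq_commuting_tuples_on: "tuples G n = commuting_tuples_on G {0..<n} (\<lambda>_ _. False)"
  by (simp add: tuples_def related_tuples_def)

lemma commuting_tuples_eq_commuting_tuples_on:
  "commuting_tuples G n = commuting_tuples_on G {0..<n} (\<lambda>_ _. True)"
  by (auto simp: commuting_tuples_def tuples_def related_tuples_def)

theorem theorem4p8:
  fixes G :: "('a, 'b) monoid_scheme" and H :: "('c, 'd) monoid_scheme"
  assumes "group G" and "finite (carrier G)"
    and "group H" and "finite (carrier H)"
    and "isoclinic G H"
  shows "subst_scaled (A_fps G) (order G) = subst_scaled (A_fps H) (order H) \<and>
         subst_scaled (B_fps G) (order G) = subst_scaled (B_fps H) (order H)"
proof -
  have "(of_nat (alpha G n) / of_nat (order G) ^ n :: rat) = of_nat (alpha H n) / of_nat (order H) ^ n"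
    and "(of_nat (beta G n) / of_nat (order G) ^ n :: rat) = of_nat (beta H n) / of_nat (order H) ^ n"
    for n
    unfolding alpha_def beta_def tuples_eq_commuting_tuples_on commuting_tuples_eq_commuting_tuples_on
    using assms by (rule isoclinic_conj_orbits_density)+
  then show ?thesis
    by (simp add: subst_scaled_def A_fps_def B_fps_def fps_compose_linear power_one_over)
qed

end
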